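(* Let $\mathcal{C}$ be a class of ontologies, $D$ a database, $\Pi=(\Sigma_{hg},\Sigma_{\mathcal{C}})$ a $\mathcal{C}$-dyadic pair of TGDs, and $q(\mathbf{x})$ a conjunctive query. Let $D^{+}=D\cup\mathrm{grAt}(D,\Pi)$. Then $\mathrm{cert}(q,D,\Sigma_{hg}\cup\Sigma_{\mathcal{C}})=\mathrm{cert}(q,D^{+},\Sigma_{\mathcal{C}})$.
   Context: Standard setting: constants, nulls, variables; atoms, databases (finite sets of facts), instances. A TGD is $\sigma:\Phi(\mathbf{x},\mathbf{y})\to\exists\mathbf{z}\,\Psi(\mathbf{x},\mathbf{z})$; $\mathbf{z}$ are existential variables, $\mathbf{x}=\mathrm{front}(\sigma)$ frontier variables; an ontology is a finite set of TGDs; a datalog rule is a TGD without existential variables and with a single head atom; $\mathsf{Datalog}$ is the class of ontologies of datalog rules. Certain answers $\mathrm{cert}(q,D,\Sigma)$ of a CQ $q$ is the intersection of $q(M)$ over all models $M\supseteq D$ of $\Sigma$. $\mathrm{chase}(D,\Sigma)$ is the (unique, nulls determined by triggers) result of the chase, a universal model. $\mathrm{hdpred}(\Sigma)$ / $\mathrm{bdpred}(\Sigma)$ denote the predicates occurring in heads / bodies of rules of $\Sigma$. Positions: $P[i]$ is the $i$-th argument position of predicate $P$. For an ontology $\Sigma$ and existential variable $z$ of $\Sigma$, a position $\pi$ is $z$-affected if either some rule has $z$ in its head at $\pi$, or some rule has a frontier variable $x$ occurring in its head at $\pi$ and occurring in its body only at $z$-affected positions. $\mathrm{aff}(\pi)$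 is the set of existential variables $z$ such that $\pi$ is $z$-affected. A body variable $x$ of a rule, occurring in the body at positions $\pi_1,\dots,\pi_n$, is harmless if $\bigcap_i\mathrm{aff}(\pi_i)=\emptyset$, otherwise harmful; a harmful frontier variable is dangerous. A set $\Sigma'\subseteq\Sigma$ is head-ground w.r.t. $\Sigma$ if: (1) $\Sigma'\in\mathsf{Datalog}$; (2) every head atom of $\Sigma'$ contains only variables that are harmless w.r.t. $\Sigma$; (3) $\mathrm{hdpred}(\Sigma')\cap\mathrm{bdpred}(\Sigma')=\emptyset$; (4) $\mathrm{hdpred}(\Sigma')\cap\mathrm{hdpred}(\Sigma\setminus\Sigma')=\emptyset$. A pair $\Pi=(\Sigma_{hg},\Sigma_{\mathcal{C}})$ of ontologies is $\mathcal{C}$-dyadic if $\Sigma_{hg}$ is head-ground w.r.t. $\Sigma_{hg}\cup\Sigma_{\mathcal{C}}$ and $\Sigma_{\mathcal{C}}\in\mathcal{C}$. Define $\mathrm{grAt}(D,\Pi)=\{a\in\mathrm{chase}(D,\Sigma_{hg}\cup\Sigma_{\mathcal{C}}) : \text{the predicate of } a \text{ is in } \mathrm{hdpred}(\Sigma_{hg})\}$. *)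

theory Defs
  imports Main
begin

(* An atom P(t_1,...,t_n): a predicate together with its argument list.
   Argument positions are indexed from 0 (position (P,i) is the (i+1)-th argument). *)
datatype ('p, 'a) atom = Atom (pred: 'p) (args: "'a list")

(* A TGD  body(x,y) -> exists z. head(x,z); rule atoms contain variables only. *)
datatype ('p, 'v) tgd = TGD (body: "('p, 'v) atom set") (head: "('p, 'v) atom set")

definition atomvars :: "('p, 'v) atom set \<Rightarrow> 'v set" where
  "atomvars A = (\<Union>a\<in>A. set (args a))"

definition bodyvars :: "('p, 'v) tgd \<Rightarrow> 'v set" where
  "bodyvars \<sigma> = atomvars (body \<sigma>)"

definition headvars :: "('p, 'v) tgd \<Rightarrow> 'v set" where
  "headvars \<sigma> = atomvars (head \<sigma>)"

definition front :: "('p, 'v) tgd \<Rightarrow> 'v set" where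
  "front \<sigma> = bodyvars \<sigma> \<inter> headvars \<sigma>"

definition exvars :: "('p, 'v) tgd \<Rightarrow> 'v set" where
  "exvars \<sigma> = headvars \<sigma> - bodyvars \<sigma>"

definition wf_tgd :: "('p, 'v) tgd \<Rightarrow> bool" where
  "wf_tgd \<sigma> \<longleftrightarrow> finite (body \<sigma>) \<and> finite (head \<sigma>) \<and> head \<sigma> \<noteq> {}"

definition ontology :: "('p, 'v) tgd set \<Rightarrow> bool" where
  "ontology \<Sigma> \<longleftrightarrow> finite \<Sigma> \<and> (\<forall>\<sigma>\<in>\<Sigma>. wf_tgd \<sigma>)"

definition datalog_rule :: "('p, 'v) tgd \<Rightarrow> bool" where
  "datalog_rule \<sigma> \<longleftrightarrow> exvars \<sigma> = {} \<and> (\<exists>a. head \<sigma> = {a})"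

definition Datalog :: "('p, 'v) tgd set set" where
  "Datalog = {\<Sigma>. ontology \<Sigma> \<and> (\<forall>\<sigma>\<in>\<Sigma>. datalog_rule \<sigma>)}"

definition hdpred :: "('p, 'v) tgd set \<Rightarrow> 'p set" where
  "hdpred \<Sigma> = (\<Union>\<sigma>\<in>\<Sigma>. pred ` head \<sigma>)"

definition bdpred :: "('p, 'v) tgd set \<Rightarrow> 'p set" where
  "bdpred \<Sigma> = (\<Union>\<sigma>\<in>\<Sigma>. pred ` body \<sigma>)"

(* conjunctive query q(x) = exists y. phi(x,y): answer variables and atoms *)
datatype ('p, 'v) cq = CQ (ansvars: "'v list") (qatoms: "('p, 'v) atom set")

definition wf_cq :: "('p, 'v) cq \<Rightarrow> bool" where
  "wf_cq q \<longleftrightarrow> finite (qatoms q) \<and> set (ansvars q) \<subseteq> atomvars (qatoms q)"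

(* Nulls are named by the chase trigger that
   creates them: the rule, the existential variable, and the trigger's homomorphism
   restricted to the body variables. *)
datatype ('p, 'c, 'v) "term" =
    Const 'c
  | Null "('p, 'v) tgd" 'v "'v \<Rightarrow> ('p, 'c, 'v) term option"

type_synonym ('p, 'c, 'v) inst = "('p, ('p, 'c, 'v) term) atom set"

definition inst_atom :: "('v \<Rightarrow> 'b) \<Rightarrow> ('p, 'v) atom \<Rightarrow> ('p, 'b) atom" where
  "inst_atom h a = Atom (pred a) (map h (args a))"

definition database :: "('p, 'c, 'v) inst \<Rightarrow> bool" where
  "database D \<longleftrightarrow> finite D \<and> (\<forall>a\<in>D. \<forall>t\<in>set (args a). \<exists>c. t = Const c)"

definition satisfies :: "('p, 'c, 'v) inst \<Rightarrow> ('p, 'v) tgd \<Rightarrow> bool" where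
  "satisfies M \<sigma> \<longleftrightarrow>
     (\<forall>h. (\<forall>a\<in>body \<sigma>. inst_atom h a \<in> M) \<longrightarrow>
          (\<exists>h'. (\<forall>x\<in>front \<sigma>. h' x = h x) \<and> (\<forall>a\<in>head \<sigma>. inst_atom h' a \<in> M)))"

definition is_model :: "('p, 'c, 'v) inst \<Rightarrow> ('p, 'v) tgd set \<Rightarrow> ('p, 'c, 'v) inst \<Rightarrow> bool" where
  "is_model D \<Sigma> M \<longleftrightarrow> D \<subseteq> M \<and> (\<forall>\<sigma>\<in>\<Sigma>. satisfies M \<sigma>)"

definition answers :: "('p, 'v) cq \<Rightarrow> ('p, 'c, 'v) inst \<Rightarrow> 'c list set" where
  "answers q M = {cs. length cs = length (ansvars q) \<and>
      (\<exists>h. (\<forall>i<length cs. h (ansvars q ! i) = Const (cs ! i)) \<and>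
           (\<forall>a\<in>qatoms q. inst_atom h a \<in> M))}"

definition cert :: "('p, 'v) cq \<Rightarrow> ('p, 'c, 'v) inst \<Rightarrow> ('p, 'v) tgd set \<Rightarrow> 'c list set" where
  "cert q D \<Sigma> = (\<Inter>{answers q M | M. is_model D \<Sigma> M})"

definition skolem_ext :: "('p, 'v) tgd \<Rightarrow> ('v \<Rightarrow> ('p, 'c, 'v) term) \<Rightarrow> 'v \<Rightarrow> ('p, 'c, 'v) term" where
  "skolem_ext \<sigma> h v =
     (if v \<in> exvars \<sigma>
      then Null \<sigma> v (\<lambda>u. if u \<in> bodyvars \<sigma> then Some (h u) else None)
      else h v)"

inductive_set chase :: "('p, 'c, 'v) inst \<Rightarrow> ('p, 'v) tgd set \<Rightarrow> ('p, 'c, 'v) inst"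
  for D :: "('p, 'c, 'v) inst" and \<Sigma> :: "('p, 'v) tgd set" where
  base: "a \<in> D \<Longrightarrow> a \<in> chase D \<Sigma>"
| step: "\<lbrakk>\<sigma> \<in> \<Sigma>; \<forall>b\<in>body \<sigma>. inst_atom h b \<in> chase D \<Sigma>; a \<in> head \<sigma>\<rbrakk>
         \<Longrightarrow> inst_atom (skolem_ext \<sigma> h) a \<in> chase D \<Sigma>"

type_synonym 'p position = "'p \<times> nat"

(* affected \<Sigma> (\<tau>, z) \<pi>: position \<pi> is z-affected, where z is the existential
   variable z of rule \<tau> \<in> \<Sigma> *)
inductive affected :: "('p, 'v) tgd set \<Rightarrow> ('p, 'v) tgd \<times> 'v \<Rightarrow> 'p position \<Rightarrow> bool"
  for \<Sigma> :: "('p, 'v) tgd set" where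
  ex: "\<lbrakk>\<tau> \<in> \<Sigma>; z \<in> exvars \<tau>; a \<in> head \<tau>; i < length (args a); args a ! i = z\<rbrakk>
       \<Longrightarrow> affected \<Sigma> (\<tau>, z) (pred a, i)"
| propagate: "\<lbrakk>\<sigma> \<in> \<Sigma>; x \<in> front \<sigma>; a \<in> head \<sigma>; i < length (args a); args a ! i = x;
          \<forall>b\<in>body \<sigma>. \<forall>j<length (args b). args b ! j = x \<longrightarrow> affected \<Sigma> e (pred b, j)\<rbrakk>
       \<Longrightarrow> affected \<Sigma> e (pred a, i)"

definition aff :: "('p, 'v) tgd set \<Rightarrow> 'p position \<Rightarrow> (('p, 'v) tgd \<times> 'v) set" where
  "aff \<Sigma> \<pi> = {e. affected \<Sigma> e \<pi>}"

definition bodypos :: "('p, 'v) tgd \<Rightarrow> 'v \<Rightarrow> 'p position set" where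
  "bodypos \<sigma> x = {(pred b, j) | b j. b \<in> body \<sigma> \<and> j < length (args b) \<and> args b ! j = x}"

definition harmless :: "('p, 'v) tgd set \<Rightarrow> ('p, 'v) tgd \<Rightarrow> 'v \<Rightarrow> bool" where
  "harmless \<Sigma> \<sigma> x \<longleftrightarrow> x \<in> bodyvars \<sigma> \<and> (\<Inter>\<pi>\<in>bodypos \<sigma> x. aff \<Sigma> \<pi>) = {}"

definition head_ground :: "('p, 'v) tgd set \<Rightarrow> ('p, 'v) tgd set \<Rightarrow> bool" where
  "head_ground \<Sigma>' \<Sigma> \<longleftrightarrow>
     \<Sigma>' \<subseteq> \<Sigma> \<and>
     \<Sigma>' \<in> Datalog \<and>
     (\<forall>\<sigma>\<in>\<Sigma>'. \<forall>a\<in>head \<sigma>. \<forall>x\<in>set (args a). harmless \<Sigma> \<sigma> x) \<and>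
     hdpred \<Sigma>' \<inter> bdpred \<Sigma>' = {} \<and>
     hdpred \<Sigma>' \<inter> hdpred (\<Sigma> - \<Sigma>') = {}"

definition dyadic :: "('p, 'v) tgd set set \<Rightarrow> ('p, 'v) tgd set \<times> ('p, 'v) tgd set \<Rightarrow> bool" where
  "dyadic \<C> \<Pi> \<longleftrightarrow> head_ground (fst \<Pi>) (fst \<Pi> \<union> snd \<Pi>) \<and> snd \<Pi> \<in> \<C>"

definition grAt :: "('p, 'c, 'v) inst \<Rightarrow> ('p, 'v) tgd set \<times> ('p, 'v) tgd set \<Rightarrow> ('p, 'c, 'v) inst" where
  "grAt D \<Pi> = {a \<in> chase D (fst \<Pi> \<union> snd \<Pi>). pred a \<in> hdpred (fst \<Pi>)}"

end

theory Submission
  imports Defs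
begin

text \<open>Every null in the chase sits at a position affected by the existential variable
  that created it, so a harmless variable is always bound to a constant; hence the
  facts derived by the head-ground rules are ground. Replacing each null of the chase by the
  witness that a model provides for the trigger creating it is a homomorphism from the chase
  into every model of \<open>D\<^sup>+\<close> and \<open>\<Sigma>\<^sub>\<C>\<close>, since the head-ground rules only derive ground facts,
  which lie in \<open>D\<^sup>+\<close>. Conversely, every model of \<open>D\<close> and \<open>\<Sigma>\<^sub>h\<^sub>g \<union> \<Sigma>\<^sub>\<C>\<close> contains these ground facts
  and is therefore a model of \<open>D\<^sup>+\<close> and \<open>\<Sigma>\<^sub>\<C>\<close>.\<close>

definition ground_atom :: "('p, ('p, 'c, 'v) term) atom \<Rightarrow> bool" where
  "ground_atom a \<longleftrightarrow> (\<forall>t\<in>set (args a). \<exists>c. t = Const c)"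

lemma inst_atom_comp: "inst_atom g (inst_atom h a) = inst_atom (g \<circ> h) a"
  by (simp add: inst_atom_def)

lemma pred_inst_atom [simp]: "pred (inst_atom h a) = pred a"
  by (simp add: inst_atom_def)

lemma database_ground_atom: "database D \<Longrightarrow> a \<in> D \<Longrightarrow> ground_atom a"
  by (auto simp: database_def ground_atom_def)

lemma headvar_front_or_exvar: "v \<in> headvars \<sigma> \<Longrightarrow> v \<notin> exvars \<sigma> \<Longrightarrow> v \<in> front \<sigma>"
  by (auto simp: exvars_def front_def)

lemma chase_is_model: "is_model D \<Sigma> (chase D \<Sigma>)"
  unfolding is_model_def satisfies_def
proof (intro conjI subsetI ballI allI impI)
  fix \<sigma> h assume "\<sigma> \<in> \<Sigma>" "\<forall>a\<in>body \<sigma>. inst_atom h a \<in> chase D \<Sigma>"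
  then show "\<exists>h'. (\<forall>x\<in>front \<sigma>. h' x = h x) \<and> (\<forall>a\<in>head \<sigma>. inst_atom h' a \<in> chase D \<Sigma>)"
    by (intro exI[of _ "skolem_ext \<sigma> h"])
       (auto intro: chase.step simp: skolem_ext_def front_def exvars_def)
qed (auto intro: chase.base)


lemma chase_null_affected:
  assumes "a \<in> chase D \<Sigma>" "database D"
    and "i < length (args a)" "args a ! i = Null \<tau> z f"
  shows "affected \<Sigma> (\<tau>, z) (pred a, i)"
  using assms(1,3,4)
proof (induction arbitrary: i rule: chase.induct)
  case (base a)
  then show ?case
    using database_ground_atom[OF assms(2)] by (metis ground_atom_def nth_mem term.distinct(1))
next
  case (step \<sigma> h a)
  define v where "v = args a ! i"
  have i: "i < length (args a)" using step.prems by (simp add: inst_atom_def)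
  have sk: "skolem_ext \<sigma> h v = Null \<tau> z f" using step.prems i by (simp add: inst_atom_def v_def)
  show ?case
  proof (cases "v \<in> exvars \<sigma>")
    case True
    then have "\<tau> = \<sigma>" "z = v" using sk by (auto simp: skolem_ext_def)
    then show ?thesis using affected.ex[OF step.hyps(1) True step.hyps(2) i] v_def by simp
  next
    case False
    have hv: "h v = Null \<tau> z f" using sk False by (simp add: skolem_ext_def)
    have "v \<in> headvars \<sigma>"
      using step.hyps(2) i unfolding headvars_def atomvars_def v_def by (auto intro: nth_mem)
    then have "v \<in> front \<sigma>" using False headvar_front_or_exvar by metis
    moreover have "\<forall>b\<in>body \<sigma>. \<forall>j<length (args b). args b ! j = v \<longrightarrow> affected \<Sigma> (\<tau>, z) (pred b, j)"
      using step.IH hv by (fastforce simp: inst_atom_def)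
    ultimately show ?thesis using affected.propagate[OF step.hyps(1) _ step.hyps(2) i] v_def by simp
  qed
qed

lemma harmless_var_const:
  assumes "database D" "harmless \<Sigma> \<sigma> x" "\<forall>b\<in>body \<sigma>. inst_atom h b \<in> chase D \<Sigma>"
  shows "\<exists>c. h x = Const c"
proof (cases "h x")
  case (Null \<tau> z f)
  have "(\<tau>, z) \<in> aff \<Sigma> \<pi>" if pos: "\<pi> \<in> bodypos \<sigma> x" for \<pi>
  proof -
    obtain b j where b: "b \<in> body \<sigma>" "j < length (args b)" "args b ! j = x" "\<pi> = (pred b, j)"
      using pos unfolding bodypos_def by blast
    then show ?thesis
      using chase_null_affected[OF assms(3)[rule_format, OF b(1)] assms(1), of j] Null
      by (simp add: aff_def inst_atom_def)
  qed
  then show ?thesis using assms(2) unfolding harmless_def by blast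
qed simp

lemma head_ground_chase_ground:
  assumes "database D" "head_ground S \<Sigma>" "a \<in> chase D \<Sigma>" "pred a \<in> hdpred S"
  shows "ground_atom a"
  using assms(3)
proof (cases rule: chase.cases)
  case base
  then show ?thesis using database_ground_atom[OF assms(1)] by blast
next
  case (step \<sigma> h a')
  have "\<sigma> \<in> S"
  proof (rule ccontr)
    assume "\<sigma> \<notin> S"
    then have "pred a \<in> hdpred (\<Sigma> - S)" using step unfolding hdpred_def by force
    then show False using assms(2,4) unfolding head_ground_def by blast
  qed
  then have "exvars \<sigma> = {}" and harmless: "\<forall>x\<in>set (args a'). harmless \<Sigma> \<sigma> x"
    using assms(2) step unfolding head_ground_def Datalog_def datalog_rule_def by auto
  then show ?thesis
    using step harmless_var_const[OF assms(1)]
    by (auto simp: ground_atom_def inst_atom_def skolem_ext_def)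
qed

lemma grAt_ground:
  assumes "database D" "head_ground \<Sigma>hg (\<Sigma>hg \<union> \<Sigma>C)" "a \<in> grAt D (\<Sigma>hg, \<Sigma>C)"
  shows "ground_atom a"
  using assms head_ground_chase_ground unfolding grAt_def by auto


definition model_witness ::
    "('p, 'c, 'v) inst \<Rightarrow> ('p, 'v) tgd \<Rightarrow> ('v \<Rightarrow> ('p, 'c, 'v) term option) \<Rightarrow> 'v \<Rightarrow> ('p, 'c, 'v) term"
  where "model_witness M \<sigma> f =
    (SOME h'. (\<forall>x\<in>front \<sigma>. Some (h' x) = f x) \<and> (\<forall>a\<in>head \<sigma>. inst_atom h' a \<in> M))"

text \<open>A null records its trigger, so it is mapped to the value the model chooses for its
  existential variable once the trigger's own terms have been mapped.\<close>

primrec chase_hom :: "('p, 'c, 'v) inst \<Rightarrow> ('p, 'c, 'v) term \<Rightarrow> ('p, 'c, 'v) term" where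
  "chase_hom M (Const c) = Const c"
| "chase_hom M (Null \<sigma> z f) = model_witness M \<sigma> (map_option (chase_hom M) \<circ> f) z"

lemma chase_hom_ground_atom:
  assumes "ground_atom a"
  shows "inst_atom (chase_hom M) a = a"
proof -
  have "map (chase_hom M) (args a) = args a"
    using assms by (intro map_idI) (auto simp: ground_atom_def)
  then show ?thesis by (simp add: inst_atom_def)
qed

lemma chase_hom_step:
  assumes "satisfies M \<sigma>" "\<forall>b\<in>body \<sigma>. inst_atom (chase_hom M \<circ> h) b \<in> M" "a \<in> head \<sigma>"
  shows "inst_atom (chase_hom M) (inst_atom (skolem_ext \<sigma> h) a) \<in> M"
proof -
  define f where "f = map_option (chase_hom M) \<circ> (\<lambda>u. if u \<in> bodyvars \<sigma> then Some (h u) else None)"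
  obtain h' where "\<forall>x\<in>front \<sigma>. h' x = (chase_hom M \<circ> h) x" "\<forall>a\<in>head \<sigma>. inst_atom h' a \<in> M"
    using assms(1,2) unfolding satisfies_def by blast
  then have "\<exists>h'. (\<forall>x\<in>front \<sigma>. Some (h' x) = f x) \<and> (\<forall>a\<in>head \<sigma>. inst_atom h' a \<in> M)"
    by (intro exI[of _ h']) (auto simp: f_def front_def)
  then have W: "(\<forall>x\<in>front \<sigma>. Some (model_witness M \<sigma> f x) = f x)
      \<and> (\<forall>a\<in>head \<sigma>. inst_atom (model_witness M \<sigma> f) a \<in> M)"
    unfolding model_witness_def by (rule someI_ex)
  have "chase_hom M (skolem_ext \<sigma> h v) = model_witness M \<sigma> f v" if "v \<in> set (args a)" for v
  proof (cases "v \<in> exvars \<sigma>")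
    case False
    have "v \<in> headvars \<sigma>" using that assms(3) unfolding headvars_def atomvars_def by blast
    then have "v \<in> front \<sigma>" using False headvar_front_or_exvar by metis
    then show ?thesis using W False by (auto simp: f_def front_def skolem_ext_def)
  qed (simp add: skolem_ext_def f_def)
  then have "inst_atom (chase_hom M) (inst_atom (skolem_ext \<sigma> h) a) = inst_atom (model_witness M \<sigma> f) a"
    by (simp add: inst_atom_def)
  then show ?thesis using W assms(3) by simp
qed

text \<open>The rules in \<open>T\<close> need not hold in \<open>M\<close>; it suffices that their chase
  consequences are ground facts of \<open>M\<close>.\<close>

lemma chase_hom_into_model:
  assumes "database D" "D \<subseteq> M" "\<forall>\<sigma>\<in>\<Sigma> - T. satisfies M \<sigma>"
    and "\<forall>\<sigma>\<in>T. \<forall>h. \<forall>a\<in>head \<sigma>. (\<forall>b\<in>body \<sigma>. inst_atom h b \<in> chase D \<Sigma>) \<longrightarrow>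
          inst_atom (skolem_ext \<sigma> h) a \<in> M \<and> ground_atom (inst_atom (skolem_ext \<sigma> h) a)"
    and "a \<in> chase D \<Sigma>"
  shows "inst_atom (chase_hom M) a \<in> M"
  using assms(5)
proof (induction rule: chase.induct)
  case (base a)
  then show ?case
    using assms(2) chase_hom_ground_atom database_ground_atom[OF assms(1)] by (metis subsetD)
next
  case (step \<sigma> h a)
  show ?case
  proof (cases "\<sigma> \<in> T")
    case True
    then have "inst_atom (skolem_ext \<sigma> h) a \<in> M" "ground_atom (inst_atom (skolem_ext \<sigma> h) a)"
      using assms(4) step.hyps(2) step.IH by blast+
    then show ?thesis by (simp add: chase_hom_ground_atom)
  next
    case False
    have "\<forall>b\<in>body \<sigma>. inst_atom (chase_hom M \<circ> h) b \<in> M"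
      using step.IH by (simp add: inst_atom_comp)
    then show ?thesis using chase_hom_step assms(3) False step.hyps by blast
  qed
qed

lemma chase_hom_into_model_of:
  assumes "database D" "is_model D \<Sigma> M" "a \<in> chase D \<Sigma>"
  shows "inst_atom (chase_hom M) a \<in> M"
  by (rule chase_hom_into_model[OF assms(1) _ _ _ assms(3), where T = "{}"])
     (use assms(2) in \<open>auto simp: is_model_def\<close>)


lemma answers_hom:
  assumes "cs \<in> answers q A" "\<forall>a\<in>A. inst_atom g a \<in> M" "\<forall>c. g (Const c) = Const c"
  shows "cs \<in> answers q M"
proof -
  obtain h where "length cs = length (ansvars q)" "\<forall>i<length cs. h (ansvars q ! i) = Const (cs ! i)"
      "\<forall>a\<in>qatoms q. inst_atom h a \<in> A"
    using assms(1) unfolding answers_def by blast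
  then show ?thesis unfolding answers_def
    using assms(2,3) by (intro CollectI conjI exI[of _ "g \<circ> h"]) (auto simp: inst_atom_comp[symmetric])
qed

lemma cert_subset_answers_chase: "cert q D \<Sigma> \<subseteq> answers q (chase D \<Sigma>)"
  using chase_is_model unfolding cert_def by blast

lemma cert_subset_if_chase_maps_into_models:
  assumes "\<And>M. is_model D' \<Sigma>' M \<Longrightarrow> \<forall>a\<in>chase D \<Sigma>. inst_atom (chase_hom M) a \<in> M"
  shows "cert q D \<Sigma> \<subseteq> cert q D' \<Sigma>'"
proof
  fix cs assume cs: "cs \<in> cert q D \<Sigma>"
  show "cs \<in> cert q D' \<Sigma>'" unfolding cert_def
  proof (rule InterI)
    fix X assume "X \<in> {answers q M |M. is_model D' \<Sigma>' M}"
    then obtain M where "X = answers q M" "is_model D' \<Sigma>' M" by blast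
    then show "cs \<in> X"
      using answers_hom[of cs q "chase D \<Sigma>" "chase_hom M" M] cs cert_subset_answers_chase assms
      by auto
  qed
qed

lemma cert_antimono_models:
  assumes "\<And>M. is_model D \<Sigma> M \<Longrightarrow> is_model D' \<Sigma>' M"
  shows "cert q D' \<Sigma>' \<subseteq> cert q D \<Sigma>"
  using assms unfolding cert_def by blast


lemma model_of_augmented_database:
  assumes "database D" "head_ground \<Sigma>hg (\<Sigma>hg \<union> \<Sigma>C)" "is_model D (\<Sigma>hg \<union> \<Sigma>C) M"
  shows "is_model (D \<union> grAt D (\<Sigma>hg, \<Sigma>C)) \<Sigma>C M"
proof -
  have "a \<in> M" if a: "a \<in> grAt D (\<Sigma>hg, \<Sigma>C)" for a
  proof -
    have "inst_atom (chase_hom M) a \<in> M"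
      using chase_hom_into_model_of[OF assms(1,3)] a unfolding grAt_def by simp
    then show ?thesis using chase_hom_ground_atom[OF grAt_ground[OF assms(1,2) a]] by simp
  qed
  then show ?thesis using assms(3) unfolding is_model_def by blast
qed

lemma chase_maps_into_augmented_model:
  assumes "database D" "head_ground \<Sigma>hg (\<Sigma>hg \<union> \<Sigma>C)"
    and "is_model (D \<union> grAt D (\<Sigma>hg, \<Sigma>C)) \<Sigma>C M" "a \<in> chase D (\<Sigma>hg \<union> \<Sigma>C)"
  shows "inst_atom (chase_hom M) a \<in> M"
proof (rule chase_hom_into_model[OF assms(1) _ _ _ assms(4), where T = "\<Sigma>hg - \<Sigma>C"])
  show "\<forall>\<sigma>\<in>\<Sigma>hg - \<Sigma>C. \<forall>h. \<forall>a\<in>head \<sigma>. (\<forall>b\<in>body \<sigma>. inst_atom h b \<in> chase D (\<Sigma>hg \<union> \<Sigma>C)) \<longrightarrow>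
      inst_atom (skolem_ext \<sigma> h) a \<in> M \<and> ground_atom (inst_atom (skolem_ext \<sigma> h) a)"
  proof (intro ballI allI impI)
    fix \<sigma> h a assume "\<sigma> \<in> \<Sigma>hg - \<Sigma>C" "a \<in> head \<sigma>" "\<forall>b\<in>body \<sigma>. inst_atom h b \<in> chase D (\<Sigma>hg \<union> \<Sigma>C)"
    then have "inst_atom (skolem_ext \<sigma> h) a \<in> grAt D (\<Sigma>hg, \<Sigma>C)"
      unfolding grAt_def hdpred_def by (auto intro: chase.step)
    then show "inst_atom (skolem_ext \<sigma> h) a \<in> M \<and> ground_atom (inst_atom (skolem_ext \<sigma> h) a)"
      using assms(3) grAt_ground[OF assms(1,2)] unfolding is_model_def by blast
  qed
qed (use assms(3) in \<open>auto simp: is_model_def\<close>)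

theorem mainTheorem3:
  fixes \<C> :: "('p, 'v) tgd set set"
    and D :: "('p, 'c, 'v) inst"
    and \<Sigma>hg \<Sigma>C :: "('p, 'v) tgd set"
    and q :: "('p, 'v) cq"
  assumes "\<forall>\<Sigma>\<in>\<C>. ontology \<Sigma>"
    and "database D"
    and "ontology \<Sigma>hg" and "ontology \<Sigma>C"
    and "dyadic \<C> (\<Sigma>hg, \<Sigma>C)"
    and "wf_cq q"
  shows "cert q D (\<Sigma>hg \<union> \<Sigma>C) = cert q (D \<union> grAt D (\<Sigma>hg, \<Sigma>C)) \<Sigma>C"
proof
  have hg: "head_ground \<Sigma>hg (\<Sigma>hg \<union> \<Sigma>C)" using assms(5) by (simp add: dyadic_def)
  show "cert q D (\<Sigma>hg \<union> \<Sigma>C) \<subseteq> cert q (D \<union> grAt D (\<Sigma>hg, \<Sigma>C)) \<Sigma>C"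
    by (rule cert_subset_if_chase_maps_into_models)
       (use chase_maps_into_augmented_model[OF assms(2) hg] in blast)
  show "cert q (D \<union> grAt D (\<Sigma>hg, \<Sigma>C)) \<Sigma>C \<subseteq> cert q D (\<Sigma>hg \<union> \<Sigma>C)"
    by (rule cert_antimono_models) (rule model_of_augmented_database[OF assms(2) hg])
qed

end
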